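(* Let $\mathcal{N}$ be a Nash equilibrium of $\mathcal{G}_t$ for some $t\in[0,1]$ in which $\Pr[s^r_0]<1$ and $\Pr[s^c_0]<1$. Let $\mathcal{P}$ be the pair of probability distributions over $\{s^r_1,\dots,s^r_n\}$ and $\{s^c_1,\dots,s^c_n\}$ obtained by dividing each $\Pr[s^i_j]$ ($i\in\{r,c\}$, $1\le j\le n$) by $1-\Pr[s^i_0]$. Then $\mathcal{P}$ is a Nash equilibrium of the version of $\mathcal{G}$ in which the column player receives an additional bonus of $\delta\Pr[s^r_0]/(1-\Pr[s^r_0])$ for playing $s^c_k$.
   Context: $\mathcal{G}$ is an $n\times n$ two-player game, with row strategies $s^r_1,\dots,s^r_n$ and column strategies $s^c_1,\dots,s^c_n$, whose payoffs lie in $[0.9,1.1]$; $k\in\{1,\dots,n\}$ is a fixed index and $\delta>0$ a constant. $\mathcal{G}_0$ is the $(n+1)\times(n+1)$ game with strategies $s^r_0,\dots,s^r_n$ and $s^c_0,\dots,s^c_n$ in which each player gets $1$ for playing $s^r_0$ (resp. $s^c_0$) and $0$ for any other strategy. $\mathcal{G}_1$ is the $(n+1)\times(n+1)$ game with payoffs (row, column): $(s^r_0,s^c_0)\mapsto(0,-1)$; $(s^r_0,s^c_j)\mapsto(0,\tfrac34)$ for $j\ge1$, $j\ne k$; $(s^r_0,s^c_k)\mapsto(0,\tfrac34+\delta)$; $(s^r_j,s^c_0)\mapsto(-1,\tfrac34)$ for $j\ge1$; and on $\{s^r_1,\dots,s^r_n\}\times\{s^c_1,\dots,s^c_n\}$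 the payoffs of $\mathcal{G}$. $\mathcal{G}_t=(1-t)\mathcal{G}_0+t\mathcal{G}_1$ (payoffs interpolated linearly). $\Pr[s]$ denotes the probability that the owner of pure strategy $s$ plays $s$ in $\mathcal{N}$. *)

theory Defs
  imports "HOL-Analysis.Analysis"
begin

text \<open>Bimatrix games with pure strategies indexed by natural numbers from a finite
  set; mixed strategies are functions nat => real (only their values on the
  strategy set matter).\<close>

definition mixed_strategy :: "nat set \<Rightarrow> (nat \<Rightarrow> real) \<Rightarrow> bool" where
  "mixed_strategy S p \<longleftrightarrow> (\<forall>i\<in>S. p i \<ge> 0) \<and> (\<Sum>i\<in>S. p i) = 1"

definition exp_payoff ::
  "nat set \<Rightarrow> nat set \<Rightarrow> (nat \<Rightarrow> nat \<Rightarrow> real) \<Rightarrow> (nat \<Rightarrow> real) \<Rightarrow> (nat \<Rightarrow> real) \<Rightarrow> real" where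
  "exp_payoff Sr Sc U x y = (\<Sum>i\<in>Sr. \<Sum>j\<in>Sc. x i * y j * U i j)"

definition nash_eq ::
  "nat set \<Rightarrow> nat set \<Rightarrow> (nat \<Rightarrow> nat \<Rightarrow> real) \<Rightarrow> (nat \<Rightarrow> nat \<Rightarrow> real)
     \<Rightarrow> (nat \<Rightarrow> real) \<Rightarrow> (nat \<Rightarrow> real) \<Rightarrow> bool" where
  "nash_eq Sr Sc Ur Uc x y \<longleftrightarrow>
     mixed_strategy Sr x \<and> mixed_strategy Sc y \<and>
     (\<forall>x'. mixed_strategy Sr x' \<longrightarrow> exp_payoff Sr Sc Ur x' y \<le> exp_payoff Sr Sc Ur x y) \<and>
     (\<forall>y'. mixed_strategy Sc y' \<longrightarrow> exp_payoff Sr Sc Uc x y' \<le> exp_payoff Sr Sc Uc x y)"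

definition G0_row :: "nat \<Rightarrow> nat \<Rightarrow> real" where
  "G0_row i j = (if i = 0 then 1 else 0)"
definition G0_col :: "nat \<Rightarrow> nat \<Rightarrow> real" where
  "G0_col i j = (if j = 0 then 1 else 0)"

definition G1_row :: "(nat \<Rightarrow> nat \<Rightarrow> real) \<Rightarrow> nat \<Rightarrow> nat \<Rightarrow> real" where
  "G1_row A i j = (if i = 0 then 0 else if j = 0 then -1 else A i j)"
definition G1_col :: "(nat \<Rightarrow> nat \<Rightarrow> real) \<Rightarrow> nat \<Rightarrow> real \<Rightarrow> nat \<Rightarrow> nat \<Rightarrow> real" where
  "G1_col B k \<delta> i j =
     (if i = 0 then (if j = 0 then -1 else if j = k then 3/4 + \<delta> else 3/4)
      else if j = 0 then 3/4 else B i j)"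

definition Gt_row :: "(nat \<Rightarrow> nat \<Rightarrow> real) \<Rightarrow> real \<Rightarrow> nat \<Rightarrow> nat \<Rightarrow> real" where
  "Gt_row A t i j = (1 - t) * G0_row i j + t * G1_row A i j"
definition Gt_col :: "(nat \<Rightarrow> nat \<Rightarrow> real) \<Rightarrow> nat \<Rightarrow> real \<Rightarrow> real \<Rightarrow> nat \<Rightarrow> nat \<Rightarrow> real" where
  "Gt_col B k \<delta> t i j = (1 - t) * G0_col i j + t * G1_col B k \<delta> i j"

end

theory Submission
  imports Defs
begin

text \<open>Conditioning a best response
  on not playing s_0 gives a best response on the remaining strategies: otherwise keeping
  the mass on s_0 and spreading the rest according to a better distribution would improve
  it. Against a fixed opponent, the expected payoff in G_t of a pure strategy other than
  s_0 is an affine function of its payoff in the target game, with the same slope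
  t(1 - Pr[s_0 of the opponent]) for every such strategy, and a best response survives a
  positive affine change of payoffs. The slope is positive because at t = 0 the strategy
  s_0 is strictly dominant, which Pr[s_0] < 1 excludes.\<close>

definition best_response :: "nat set \<Rightarrow> (nat \<Rightarrow> real) \<Rightarrow> (nat \<Rightarrow> real) \<Rightarrow> bool" where
  "best_response S v x \<longleftrightarrow> mixed_strategy S x \<and>
     (\<forall>x'. mixed_strategy S x' \<longrightarrow> (\<Sum>i\<in>S. x' i * v i) \<le> (\<Sum>i\<in>S. x i * v i))"

lemma exp_payoff_eq_row_sum:
  "exp_payoff Sr Sc U x y = (\<Sum>i\<in>Sr. x i * (\<Sum>j\<in>Sc. y j * U i j))"
  by (simp add: exp_payoff_def sum_distrib_left mult.assoc mult.left_commute)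

lemma exp_payoff_eq_col_sum:
  "exp_payoff Sr Sc U x y = (\<Sum>j\<in>Sc. y j * (\<Sum>i\<in>Sr. x i * U i j))"
  unfolding exp_payoff_def
  by (subst sum.swap) (simp add: sum_distrib_left mult.assoc mult.left_commute mult.commute)

lemma nash_eq_iff_best_responses:
  "nash_eq Sr Sc Ur Uc x y \<longleftrightarrow>
     best_response Sr (\<lambda>i. \<Sum>j\<in>Sc. y j * Ur i j) x \<and>
     best_response Sc (\<lambda>j. \<Sum>i\<in>Sr. x i * Uc i j) y"
  unfolding nash_eq_def best_response_def exp_payoff_eq_row_sum[of Sr Sc Ur]
    exp_payoff_eq_col_sum[of Sr Sc Uc]
  by blast

lemma sum_mixed_strategy_add_const:
  assumes "mixed_strategy S p"
  shows "(\<Sum>i\<in>S. p i * (v i + c)) = (\<Sum>i\<in>S. p i * v i) + c"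
  using assms by (simp add: mixed_strategy_def distrib_left sum.distrib flip: sum_distrib_right)

lemma best_response_ge_pure:
  assumes "best_response S v x" "finite S" "a \<in> S"
  shows "v a \<le> (\<Sum>i\<in>S. x i * v i)"
proof -
  let ?e = "\<lambda>i. if i = a then 1 else 0 :: real"
  have "mixed_strategy S ?e"
    using assms(2,3) by (simp add: mixed_strategy_def)
  then have "(\<Sum>i\<in>S. ?e i * v i) \<le> (\<Sum>i\<in>S. x i * v i)"
    using assms(1) by (simp add: best_response_def)
  moreover have "(\<Sum>i\<in>S. ?e i * v i) = (\<Sum>i\<in>S. if i = a then v i else 0)"
    by (intro sum.cong) auto
  moreover have "\<dots> = v a"
    using assms(2,3) by simp
  ultimately show ?thesis
    by simp
qed

lemma sum_mixed_strategy_affine: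
  assumes p: "mixed_strategy S p" and vw: "\<And>i. i \<in> S \<Longrightarrow> v i = c + b * w i"
  shows "(\<Sum>i\<in>S. p i * v i) = c + b * (\<Sum>i\<in>S. p i * w i)"
proof -
  have "(\<Sum>i\<in>S. p i * v i) = (\<Sum>i\<in>S. p i * (b * w i + c))"
    using vw by (simp add: add.commute)
  also have "\<dots> = (\<Sum>i\<in>S. p i * (b * w i)) + c"
    using p by (rule sum_mixed_strategy_add_const)
  also have "\<dots> = c + b * (\<Sum>i\<in>S. p i * w i)"
    by (simp add: sum_distrib_left mult.left_commute)
  finally show ?thesis .
qed

lemma best_response_affine:
  assumes br: "best_response S v x" and b: "b > 0" and vw: "\<And>i. i \<in> S \<Longrightarrow> v i = c + b * w i"
  shows "best_response S w x"
proof -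
  have x: "mixed_strategy S x"
    using br by (simp add: best_response_def)
  have payoff: "(\<Sum>i\<in>S. p i * v i) = c + b * (\<Sum>i\<in>S. p i * w i)" if "mixed_strategy S p" for p
    using that vw by (rule sum_mixed_strategy_affine)
  show ?thesis
    using br b x by (simp add: best_response_def payoff)
qed

lemma best_response_conditional:
  assumes br: "best_response (insert a S) v x" and S: "finite S" "a \<notin> S" and xa: "x a < 1"
  shows "best_response S v (\<lambda>i. x i / (1 - x a))"
proof -
  have x: "mixed_strategy (insert a S) x"
    using br by (simp add: best_response_def)
  have x_nonneg: "\<And>i. i \<in> insert a S \<Longrightarrow> x i \<ge> 0" and x_rest: "(\<Sum>i\<in>S. x i) = 1 - x a"
    using x S by (auto simp: mixed_strategy_def)
  have pos: "1 - x a > 0"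
    using xa by simp
  show ?thesis
    unfolding best_response_def
  proof (intro conjI allI impI)
    show "mixed_strategy S (\<lambda>i. x i / (1 - x a))"
      using x_nonneg x_rest pos by (simp add: mixed_strategy_def flip: sum_divide_distrib)
    fix p assume p: "mixed_strategy S p"
    define z where "z i = (if i = a then x a else (1 - x a) * p i)" for i
    have z_rest: "(\<Sum>i\<in>S. z i * f i) = (1 - x a) * (\<Sum>i\<in>S. p i * f i)" for f
      using S(2) by (auto simp: z_def sum_distrib_left mult.assoc intro: sum.cong)
    have "mixed_strategy (insert a S) z"
      using p x_nonneg pos z_rest[of "\<lambda>_. 1"] S by (auto simp: mixed_strategy_def z_def)
    then have "(\<Sum>i\<in>insert a S. z i * v i) \<le> (\<Sum>i\<in>insert a S. x i * v i)"
      using br by (simp add: best_response_def)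
    moreover have "z a = x a"
      by (simp add: z_def)
    ultimately have "(1 - x a) * (\<Sum>i\<in>S. p i * v i) \<le> (\<Sum>i\<in>S. x i * v i)"
      using S by (simp add: z_rest)
    then show "(\<Sum>i\<in>S. p i * v i) \<le> (\<Sum>i\<in>S. x i / (1 - x a) * v i)"
      using pos by (simp add: field_simps flip: sum_divide_distrib)
  qed
qed

lemma atLeast0AtMost_eq_insert: "{0..n} = insert 0 {1..n::nat}"
  by auto

lemma Gt_row_payoff:
  assumes "i \<in> {1..n}"
  shows "(\<Sum>j\<in>{0..n}. y j * Gt_row A t i j) = - t * y 0 + t * (\<Sum>j\<in>{1..n}. y j * A i j)"
  using assms
  by (simp add: atLeast0AtMost_eq_insert Gt_row_def G0_row_def G1_row_def sum_distrib_left
      algebra_simps)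

lemma Gt_row_payoff_s0: "(\<Sum>j\<in>{0..n}. y j * Gt_row A t 0 j) = (1 - t) * (\<Sum>j\<in>{0..n}. y j)"
  by (simp add: Gt_row_def G0_row_def G1_row_def sum_distrib_left mult.commute)

lemma Gt_col_payoff:
  assumes "j \<in> {1..n}"
  shows "(\<Sum>i\<in>{0..n}. x i * Gt_col B k \<delta> t i j)
       = t * (3/4) * x 0 + t * ((\<Sum>i\<in>{1..n}. x i * B i j) + (if j = k then \<delta> * x 0 else 0))"
  using assms
  by (simp add: atLeast0AtMost_eq_insert Gt_col_def G0_col_def G1_col_def sum_distrib_left
      algebra_simps)

lemma Gt_best_response_not_s0_imp_t_pos:
  assumes br: "best_response {0..n} (\<lambda>i. \<Sum>j\<in>{0..n}. y j * Gt_row A t i j) x"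
    and y: "mixed_strategy {0..n} y" and x0: "x 0 < 1" and t: "t \<ge> 0"
  shows "t > 0"
proof (rule ccontr)
  assume "\<not> t > 0"
  with t have t0: "t = 0" by simp
  let ?v = "\<lambda>i. \<Sum>j\<in>{0..n}. y j * Gt_row A t i j"
  have "?v 0 = 1" and "\<And>i. i \<in> {1..n} \<Longrightarrow> ?v i = 0"
    using y by (simp_all add: Gt_row_payoff_s0 Gt_row_payoff mixed_strategy_def t0)
  then have "(\<Sum>i\<in>{0..n}. x i * ?v i) = x 0"
    by (simp add: atLeast0AtMost_eq_insert)
  moreover have "?v 0 \<le> (\<Sum>i\<in>{0..n}. x i * ?v i)"
    using br by (rule best_response_ge_pure) simp_all
  ultimately show False
    using \<open>?v 0 = 1\<close> x0 by simp
qed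

lemma Gt_row_best_response_conditional:
  assumes br: "best_response {0..n} (\<lambda>i. \<Sum>j\<in>{0..n}. y j * Gt_row A t i j) x"
    and x0: "x 0 < 1" and y0: "y 0 < 1" and t: "t > 0"
  shows "best_response {1..n} (\<lambda>i. \<Sum>j\<in>{1..n}. y j / (1 - y 0) * A i j)
           (\<lambda>i. x i / (1 - x 0))"
proof (rule best_response_affine)
  show "best_response {1..n} (\<lambda>i. \<Sum>j\<in>{0..n}. y j * Gt_row A t i j) (\<lambda>i. x i / (1 - x 0))"
    using br x0 by (intro best_response_conditional) (simp_all add: atLeast0AtMost_eq_insert)
  show "t * (1 - y 0) > 0"
    using t y0 by simp
  fix i assume "i \<in> {1..n}"
  then show "(\<Sum>j\<in>{0..n}. y j * Gt_row A t i j)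
      = - t * y 0 + t * (1 - y 0) * (\<Sum>j\<in>{1..n}. y j / (1 - y 0) * A i j)"
    using y0 by (simp add: Gt_row_payoff sum_distrib_left)
qed

lemma Gt_col_best_response_conditional:
  assumes br: "best_response {0..n} (\<lambda>j. \<Sum>i\<in>{0..n}. x i * Gt_col B k \<delta> t i j) y"
    and x: "mixed_strategy {1..n} (\<lambda>i. x i / (1 - x 0))"
    and x0: "x 0 < 1" and y0: "y 0 < 1" and t: "t > 0"
  shows "best_response {1..n}
           (\<lambda>j. \<Sum>i\<in>{1..n}. x i / (1 - x 0) * (B i j + (if j = k then \<delta> * x 0 / (1 - x 0) else 0)))
           (\<lambda>j. y j / (1 - y 0))"
proof (rule best_response_affine)
  show "best_response {1..n} (\<lambda>j. \<Sum>i\<in>{0..n}. x i * Gt_col B k \<delta> t i j) (\<lambda>j. y j / (1 - y 0))"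
    using br y0 by (intro best_response_conditional) (simp_all add: atLeast0AtMost_eq_insert)
  show "t * (1 - x 0) > 0"
    using t x0 by simp
  fix j assume j: "j \<in> {1..n}"
  let ?bonus = "if j = k then \<delta> * x 0 / (1 - x 0) else 0"
  have "(1 - x 0) * (\<Sum>i\<in>{1..n}. x i / (1 - x 0) * (B i j + ?bonus))
      = (1 - x 0) * ((\<Sum>i\<in>{1..n}. x i / (1 - x 0) * B i j) + ?bonus)"
    by (simp only: sum_mixed_strategy_add_const[OF x])
  also have "\<dots> = (\<Sum>i\<in>{1..n}. x i * B i j) + (if j = k then \<delta> * x 0 else 0)"
    using x0 by (simp add: distrib_left sum_distrib_left)
  finally have "t * (1 - x 0) * (\<Sum>i\<in>{1..n}. x i / (1 - x 0) * (B i j + ?bonus))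
      = t * ((\<Sum>i\<in>{1..n}. x i * B i j) + (if j = k then \<delta> * x 0 else 0))"
    by (simp only: mult.assoc)
  then show "(\<Sum>i\<in>{0..n}. x i * Gt_col B k \<delta> t i j)
      = t * (3/4) * x 0 + t * (1 - x 0) * (\<Sum>i\<in>{1..n}. x i / (1 - x 0) * (B i j + ?bonus))"
    using j by (simp only: Gt_col_payoff)
qed

theorem lemma2:
  fixes n k :: nat and A B :: "nat \<Rightarrow> nat \<Rightarrow> real" and \<delta> t :: real
    and x y :: "nat \<Rightarrow> real"
  assumes payA: "\<forall>i\<in>{1..n}. \<forall>j\<in>{1..n}. 0.9 \<le> A i j \<and> A i j \<le> 1.1"
    and payB: "\<forall>i\<in>{1..n}. \<forall>j\<in>{1..n}. 0.9 \<le> B i j \<and> B i j \<le> 1.1"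
    and k: "k \<in> {1..n}"
    and delta: "\<delta> > 0"
    and t: "t \<in> {0..1}"
    and NE: "nash_eq {0..n} {0..n} (Gt_row A t) (Gt_col B k \<delta> t) x y"
    and x0: "x 0 < 1" and y0: "y 0 < 1"
  shows "nash_eq {1..n} {1..n} A
           (\<lambda>i j. B i j + (if j = k then \<delta> * x 0 / (1 - x 0) else 0))
           (\<lambda>i. x i / (1 - x 0)) (\<lambda>j. y j / (1 - y 0))"
proof -
  have br_x: "best_response {0..n} (\<lambda>i. \<Sum>j\<in>{0..n}. y j * Gt_row A t i j) x"
    and br_y: "best_response {0..n} (\<lambda>j. \<Sum>i\<in>{0..n}. x i * Gt_col B k \<delta> t i j) y"
    using NE by (simp_all add: nash_eq_iff_best_responses)
  have t_pos: "t > 0"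
    using br_x br_y t x0 by (intro Gt_best_response_not_s0_imp_t_pos) (auto simp: best_response_def)
  have x_cond: "best_response {1..n} (\<lambda>i. \<Sum>j\<in>{1..n}. y j / (1 - y 0) * A i j) (\<lambda>i. x i / (1 - x 0))"
    using br_x x0 y0 t_pos by (rule Gt_row_best_response_conditional)
  moreover have "mixed_strategy {1..n} (\<lambda>i. x i / (1 - x 0))"
    using x_cond by (simp add: best_response_def)
  with br_y x0 y0 t_pos have "best_response {1..n}
      (\<lambda>j. \<Sum>i\<in>{1..n}. x i / (1 - x 0) * (B i j + (if j = k then \<delta> * x 0 / (1 - x 0) else 0)))
      (\<lambda>j. y j / (1 - y 0))"
    by (intro Gt_col_best_response_conditional)
  ultimately show ?thesis
    by (simp only: nash_eq_iff_best_responses)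
qed

end
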